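(* Let $n\ge2$, $K\ge1$, and write $\Phi_K=(P_{1,K},\dots,P_{n,K})\colon(\mathbb{C}^{n(n-1)/2})^K\to\mathbb{C}^n$. Then each $P_{k,K}$ is a polynomial that is no more than linear in each of the variables $z_{ij,l}$. Moreover, if $K$ is even, $P_{k,K}$ depends only on $Z_1,\dots,Z_{K-1}$ and the variables $z_{ij,K}$ with $1\le i<j\le k$ (in particular $P_{1,K}$ does not depend on $Z_K$); if $K$ is odd, $P_{k,K}$ depends only on $Z_1,\dots,Z_{K-1}$ and the variables $z_{ij,K}$ with $k\le j<i\le n$.
   Context: For $k$ even, $Z_k=(z_{ij,k})_{1\le i<j\le n}$ and $M_k(Z_k)$ is the upper triangular unipotent $n\times n$ matrix with entry $z_{ij,k}$ at $(i,j)$, $i<j$; for $k$ odd, $Z_k=(z_{ij,k})_{1\le j<i\le n}$ and $M_k(Z_k)$ is the lower triangular unipotent matrix with entry $z_{ij,k}$ at $(i,j)$, $i>j$. $\Psi_K(Z_1,\dots,Z_K)=M_1(Z_1)^{-1}\cdots M_K(Z_K)^{-1}$, $\pi_n$ maps a matrix to its last row, and $\Phi_K=\pi_n\circ\Psi_K$. A polynomial $p$ is no more than linear in a variable $x$ if $p=x\tilde p+\tilde q$ with $\tilde p,\tilde q$ polynomials independent of $x$. *)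

theory Defs
  imports "Jordan_Normal_Form.Matrix" Complex_Main
begin

(* Variables z_{ij,l} are indexed by triples (i,j,l) with 1-based i,j (as in the paper).
   An assignment of all variables is a function  nat \<times> nat \<times> nat \<Rightarrow> complex. *)
type_synonym var = "nat \<times> nat \<times> nat"
type_synonym assignment = "var \<Rightarrow> complex"

definition Vars :: "nat \<Rightarrow> nat \<Rightarrow> var set" where
  "Vars n K = {(i,j,l). 1 \<le> l \<and> l \<le> K \<and> 1 \<le> i \<and> i \<le> n \<and> 1 \<le> j \<and> j \<le> n \<and>
                        (if even l then i < j else j < i)}"

inductive polyfun :: "(assignment \<Rightarrow> complex) \<Rightarrow> bool" where
  pf_const: "polyfun (\<lambda>z. c)"
| pf_var:   "polyfun (\<lambda>z. z v)"
| pf_add:   "polyfun p \<Longrightarrow> polyfun q \<Longrightarrow> polyfun (\<lambda>z. p z + q z)"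
| pf_mult:  "polyfun p \<Longrightarrow> polyfun q \<Longrightarrow> polyfun (\<lambda>z. p z * q z)"

definition indep_of :: "var \<Rightarrow> (assignment \<Rightarrow> complex) \<Rightarrow> bool" where
  "indep_of v f \<longleftrightarrow> (\<forall>z c. f (z(v := c)) = f z)"

definition at_most_linear_in :: "var \<Rightarrow> (assignment \<Rightarrow> complex) \<Rightarrow> bool" where
  "at_most_linear_in v P \<longleftrightarrow>
     (\<exists>p q. polyfun p \<and> polyfun q \<and> indep_of v p \<and> indep_of v q \<and>
            (\<forall>z. P z = z v * p z + q z))"

definition depends_only_on :: "var set \<Rightarrow> (assignment \<Rightarrow> complex) \<Rightarrow> bool" where
  "depends_only_on S f \<longleftrightarrow> (\<forall>z w. (\<forall>v\<in>S. z v = w v) \<longrightarrow> f z = f w)"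

(* M_l(Z_l): unipotent n x n, upper triangular for l even, lower triangular for l odd.
   JNF matrices are 0-indexed: entry (a,b) is paper entry (a+1,b+1). *)
definition Mmat :: "nat \<Rightarrow> nat \<Rightarrow> assignment \<Rightarrow> complex mat" where
  "Mmat n l z = mat n n (\<lambda>(a,b). if a = b then 1
        else if (if even l then a < b else b < a) then z (a+1, b+1, l) else 0)"

definition mat_inv :: "nat \<Rightarrow> complex mat \<Rightarrow> complex mat" where
  "mat_inv n A = (THE B. B \<in> carrier_mat n n \<and> A * B = 1\<^sub>m n \<and> B * A = 1\<^sub>m n)"

fun Psi :: "nat \<Rightarrow> nat \<Rightarrow> assignment \<Rightarrow> complex mat" where
  "Psi n 0 z = 1\<^sub>m n"
| "Psi n (Suc K) z = Psi n K z * mat_inv n (Mmat n (Suc K) z)"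

definition Pcomp :: "nat \<Rightarrow> nat \<Rightarrow> nat \<Rightarrow> assignment \<Rightarrow> complex" where
  "Pcomp n K k z = Psi n K z $$ (n - 1, k - 1)"

end

theory Submission
  imports Defs "Jordan_Normal_Form.Determinant"
begin

(* Call a function of the variables multiaffine on a variable set S if it is a
   polynomial, depends only on the variables in S, and is at most linear in every variable.
   This class contains constants and variables of S, is closed under sums and differences,
   and under products of factors whose supports are disjoint.

   Since Psi_{K+1} * M_{K+1} = Psi_K and M_{K+1} is unipotent triangular, the last row
   p = (p_1..p_n) of Psi_{K+1} is obtained from the last row q of Psi_K by back substitution:
     p_k = q_k - sum_{i<k} p_i z_{ik,K+1}   (K+1 even, M upper triangular),
     p_k = q_k - sum_{i>k} p_i z_{ik,K+1}   (K+1 odd,  M lower triangular).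
   Solving these equations in order (k increasing resp. decreasing) shows that p_k is multiaffine
   on the variables of Z_1..Z_K together with z_{ij,K+1} for i<j<=k resp. k<=j<i: each product
   p_i * z_{ik,K+1} multiplies a function not involving z_{ik,K+1} with that variable. *)

section \<open>Multiaffine polynomial functions\<close>

definition multiaffine :: "var set \<Rightarrow> (assignment \<Rightarrow> complex) \<Rightarrow> bool" where
  "multiaffine S f \<longleftrightarrow> polyfun f \<and> depends_only_on S f \<and> (\<forall>v. at_most_linear_in v f)"

lemma depends_only_on_indep_of: "depends_only_on S f \<Longrightarrow> v \<notin> S \<Longrightarrow> indep_of v f"
  unfolding depends_only_on_def indep_of_def by auto

lemma at_most_linear_in_indep: "polyfun f \<Longrightarrow> indep_of v f \<Longrightarrow> at_most_linear_in v f"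
  unfolding at_most_linear_in_def indep_of_def
  by (intro exI[of _ "\<lambda>z. 0"] exI[of _ f]) (auto intro: pf_const)

lemma at_most_linear_in_mult:
  assumes f: "at_most_linear_in v f" and g: "polyfun g" "indep_of v g"
  shows "at_most_linear_in v (\<lambda>z. f z * g z)"
proof -
  obtain p q where pq: "polyfun p" "polyfun q" "indep_of v p" "indep_of v q"
      "\<And>z. f z = z v * p z + q z"
    using f unfolding at_most_linear_in_def by blast
  show ?thesis unfolding at_most_linear_in_def
  proof (rule exI[of _ "\<lambda>z. p z * g z"], rule exI[of _ "\<lambda>z. q z * g z"], intro conjI allI)
    show "polyfun (\<lambda>z. p z * g z)" "polyfun (\<lambda>z. q z * g z)"
      using pq g by (auto intro: pf_mult)
    show "indep_of v (\<lambda>z. p z * g z)" "indep_of v (\<lambda>z. q z * g z)"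
      using pq g unfolding indep_of_def by auto
    show "f z * g z = z v * (p z * g z) + q z * g z" for z
      using pq(5) by (simp add: algebra_simps)
  qed
qed

lemma multiaffine_const: "multiaffine S (\<lambda>z. c)"
  unfolding multiaffine_def
  by (auto intro: pf_const at_most_linear_in_indep simp: depends_only_on_def indep_of_def)

lemma multiaffine_var:
  assumes "v \<in> S" shows "multiaffine S (\<lambda>z. z v)"
  unfolding multiaffine_def
proof (intro conjI allI)
  show "polyfun (\<lambda>z. z v)" by (rule pf_var)
  show "depends_only_on S (\<lambda>z. z v)" using assms unfolding depends_only_on_def by auto
  show "at_most_linear_in w (\<lambda>z. z v)" for w
  proof (cases "w = v")
    case True
    show ?thesis unfolding at_most_linear_in_def indep_of_def True
      by (intro exI[of _ "\<lambda>z. 1"] exI[of _ "\<lambda>z. 0"]) (auto intro: pf_const)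
  next
    case False
    then show ?thesis by (auto intro: at_most_linear_in_indep pf_var simp: indep_of_def)
  qed
qed

lemma multiaffine_mono: "multiaffine S f \<Longrightarrow> S \<subseteq> T \<Longrightarrow> multiaffine T f"
  unfolding multiaffine_def depends_only_on_def by blast

lemma multiaffine_add:
  assumes f: "multiaffine S f" and g: "multiaffine S g"
  shows "multiaffine S (\<lambda>z. f z + g z)"
  unfolding multiaffine_def
proof (intro conjI allI)
  show "polyfun (\<lambda>z. f z + g z)" using f g unfolding multiaffine_def by (auto intro: pf_add)
  show "depends_only_on S (\<lambda>z. f z + g z)"
    using f g unfolding multiaffine_def depends_only_on_def by metis
  fix v
  obtain p q p' q' where "polyfun p" "polyfun q" "indep_of v p" "indep_of v q"
      "\<forall>z. f z = z v * p z + q z" "polyfun p'" "polyfun q'" "indep_of v p'" "indep_of v q'"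
      "\<forall>z. g z = z v * p' z + q' z"
    using f g unfolding multiaffine_def at_most_linear_in_def by meson
  then show "at_most_linear_in v (\<lambda>z. f z + g z)"
    unfolding at_most_linear_in_def indep_of_def
    by (intro exI[of _ "\<lambda>z. p z + p' z"] exI[of _ "\<lambda>z. q z + q' z"])
       (auto intro!: polyfun.intros simp: algebra_simps)
qed

lemma multiaffine_mult:
  assumes f: "multiaffine S f" and g: "multiaffine T g" and disj: "S \<inter> T = {}"
  shows "multiaffine (S \<union> T) (\<lambda>z. f z * g z)"
  unfolding multiaffine_def
proof (intro conjI allI)
  show "polyfun (\<lambda>z. f z * g z)" using f g unfolding multiaffine_def by (auto intro: pf_mult)
  show "depends_only_on (S \<union> T) (\<lambda>z. f z * g z)"
    using f g unfolding multiaffine_def depends_only_on_def by (metis UnCI)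
  fix v
  show "at_most_linear_in v (\<lambda>z. f z * g z)"
  proof (cases "v \<in> S")
    case True
    then have "indep_of v g"
      using g disj depends_only_on_indep_of unfolding multiaffine_def by blast
    then show ?thesis using f g at_most_linear_in_mult unfolding multiaffine_def by blast
  next
    case False
    then have "indep_of v f" using f depends_only_on_indep_of unfolding multiaffine_def by blast
    then have "at_most_linear_in v (\<lambda>z. g z * f z)"
      using f g at_most_linear_in_mult unfolding multiaffine_def by blast
    then show ?thesis by (simp add: mult.commute)
  qed
qed

lemma multiaffine_diff:
  assumes "multiaffine S f" "multiaffine S g"
  shows "multiaffine S (\<lambda>z. f z - g z)"
proof -
  have "multiaffine S (\<lambda>z. - 1 * g z)"
    using multiaffine_mult[OF multiaffine_const[of "{}" "-1"] assms(2)] by simp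
  from multiaffine_add[OF assms(1) this] show ?thesis by simp
qed

lemma multiaffine_sum:
  "finite I \<Longrightarrow> (\<And>i. i \<in> I \<Longrightarrow> multiaffine S (f i)) \<Longrightarrow> multiaffine S (\<lambda>z. \<Sum>i\<in>I. f i z)"
proof (induction I rule: finite_induct)
  case empty
  then show ?case using multiaffine_const by simp
next
  case (insert x F)
  then show ?case using multiaffine_add[of S "f x" "\<lambda>z. \<Sum>i\<in>F. f i z"] by simp
qed

section \<open>The matrices \<open>M\<^sub>l\<close> and the last row of \<open>\<Psi>\<^sub>K\<close>\<close>

definition free_entry :: "nat \<Rightarrow> nat \<Rightarrow> nat \<Rightarrow> bool" where
  "free_entry l a b \<longleftrightarrow> (if even l then a < b else b < a)"

lemma Mmat_carrier: "Mmat n l z \<in> carrier_mat n n"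
  unfolding Mmat_def by simp

lemma Mmat_index:
  "a < n \<Longrightarrow> b < n \<Longrightarrow>
   Mmat n l z $$ (a,b) = (if a = b then 1 else if free_entry l a b then z (a+1, b+1, l) else 0)"
  unfolding Mmat_def free_entry_def by simp

lemma det_Mmat: "det (Mmat n l z) = 1"
proof -
  have "det (Mmat n l z) = prod_list (diag_mat (Mmat n l z))"
  proof (cases "even l")
    case True
    then show ?thesis
      by (intro det_upper_triangular[OF _ Mmat_carrier]) (auto simp: Mmat_def)
  next
    case False
    then show ?thesis
      by (intro det_lower_triangular[OF _ Mmat_carrier]) (auto simp: Mmat_def)
  qed
  also have "diag_mat (Mmat n l z) = replicate n 1"
    by (rule nth_equalityI) (auto simp: diag_mat_def Mmat_def)
  finally show ?thesis by simp
qed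

text \<open>Since \<open>det M\<^sub>l = 1\<close>, \<open>mat_inv\<close> really is a two-sided inverse of \<open>M\<^sub>l\<close>.\<close>

lemma mat_inv_Mmat:
  "mat_inv n (Mmat n l z) \<in> carrier_mat n n \<and> mat_inv n (Mmat n l z) * Mmat n l z = 1\<^sub>m n"
proof -
  let ?M = "Mmat n l z"
  have "?M \<in> Units (ring_mat TYPE(complex) n undefined)"
    by (rule det_non_zero_imp_unit[OF Mmat_carrier]) (simp add: det_Mmat)
  then obtain B where B: "B \<in> carrier_mat n n" "B * ?M = 1\<^sub>m n" "?M * B = 1\<^sub>m n"
    by (auto simp: Units_def ring_mat_def)
  have unique: "C = B" if C: "C \<in> carrier_mat n n" "?M * C = 1\<^sub>m n" for C
  proof -
    have "C = (B * ?M) * C" using B C by simp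
    also have "\<dots> = B * (?M * C)" using B C Mmat_carrier by (metis assoc_mult_mat)
    finally show ?thesis using B C by simp
  qed
  have "mat_inv n ?M = B"
    unfolding mat_inv_def by (rule the_equality) (use B unique in blast)+
  then show ?thesis using B by simp
qed

lemma Psi_carrier: "Psi n K z \<in> carrier_mat n n"
  by (induction K) (use mat_inv_Mmat in auto)

lemma Psi_Suc_mult_Mmat: "Psi n (Suc K) z * Mmat n (Suc K) z = Psi n K z"
proof -
  let ?M = "Mmat n (Suc K) z"
  have "Psi n (Suc K) z * ?M = Psi n K z * (mat_inv n ?M * ?M)"
    using Psi_carrier[of n K z] mat_inv_Mmat[of n "Suc K" z] Mmat_carrier
    by (simp add: assoc_mult_mat[of _ n n _ n _ n])
  then show ?thesis using mat_inv_Mmat[of n "Suc K" z] Psi_carrier[of n K z] by simp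
qed

lemma index_mult_square:
  assumes "A \<in> carrier_mat n n" "B \<in> carrier_mat n n" "a < n" "b < n"
  shows "(A * B) $$ (a,b) = (\<Sum>i<n. A $$ (a,i) * B $$ (i,b))"
  using assms by (simp add: index_mult_mat scalar_prod_def lessThan_atLeast0)

lemma sum_unipotent_column:
  fixes F G :: "nat \<Rightarrow> complex"
  assumes "k < n" "T \<subseteq> {..<n}" "k \<notin> T"
  shows "(\<Sum>i<n. F i * (if i = k then 1 else if i \<in> T then G i else 0)) = F k + (\<Sum>i\<in>T. F i * G i)"
proof -
  have "(\<Sum>i<n. F i * (if i = k then 1 else if i \<in> T then G i else 0))
      = (\<Sum>i<n. (if i = k then F k else 0) + (if i \<in> T then F i * G i else 0))"
    by (rule sum.cong) (use assms(3) in auto)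
  also have "\<dots> = F k + (\<Sum>i\<in>{..<n} \<inter> T. F i * G i)"
    using assms(1) by (simp add: sum.distrib sum.inter_restrict)
  also have "{..<n} \<inter> T = T" using assms(2) by blast
  finally show ?thesis .
qed

lemma last_row_Psi_Suc:
  assumes "k < n"
  shows "Psi n (Suc K) z $$ (n-1,k) = Psi n K z $$ (n-1,k)
     - (\<Sum>i\<in>{i. i < n \<and> free_entry (Suc K) i k}. Psi n (Suc K) z $$ (n-1,i) * z (i+1,k+1,Suc K))"
proof -
  let ?T = "{i. i < n \<and> free_entry (Suc K) i k}"
  let ?p = "\<lambda>i. Psi n (Suc K) z $$ (n-1,i)"
  have "Psi n K z $$ (n-1,k) = (Psi n (Suc K) z * Mmat n (Suc K) z) $$ (n-1,k)"
    by (simp only: Psi_Suc_mult_Mmat)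
  also have "\<dots> = (\<Sum>i<n. ?p i * Mmat n (Suc K) z $$ (i,k))"
    by (rule index_mult_square[OF Psi_carrier Mmat_carrier]) (use assms in auto)
  also have "\<dots> = (\<Sum>i<n. ?p i * (if i = k then 1 else if i \<in> ?T then z (i+1,k+1,Suc K) else 0))"
    by (rule sum.cong) (use assms in \<open>simp_all add: Mmat_index del: Psi.simps\<close>)
  also have "\<dots> = ?p k + (\<Sum>i\<in>?T. ?p i * z (i+1,k+1,Suc K))"
    by (rule sum_unipotent_column) (use assms in \<open>auto simp: free_entry_def\<close>)
  finally show ?thesis by (simp add: eq_diff_eq del: Psi.simps)
qed

section \<open>Back substitution preserves multiaffinity\<close>

lemma upper_substitution_multiaffine:
  fixes f g :: "nat \<Rightarrow> assignment \<Rightarrow> complex"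
  assumes eq: "\<And>k z. k < n \<Longrightarrow> f k z = g k z - (\<Sum>i<k. f i z * z (i+1,k+1,L))"
    and g: "\<And>k. k < n \<Longrightarrow> multiaffine A (g k)"
    and fresh: "\<And>a b. (a,b,L) \<notin> A"
  shows "k < n \<Longrightarrow> multiaffine (A \<union> {(a,b,l). l = L \<and> 1 \<le> a \<and> a < b \<and> b \<le> k+1}) (f k)"
proof (induction k rule: less_induct)
  case (less k)
  let ?U = "\<lambda>k. A \<union> {(a,b,l). l = L \<and> 1 \<le> a \<and> a < b \<and> b \<le> k+1}"
  have sum: "multiaffine (?U k) (\<lambda>z. \<Sum>i<k. f i z * z (i+1,k+1,L))"
  proof (rule multiaffine_sum)
    fix i assume i: "i \<in> {..<k}"
    have "multiaffine (?U i \<union> {(i+1,k+1,L)}) (\<lambda>z. f i z * z (i+1,k+1,L))"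
      by (rule multiaffine_mult[OF less.IH multiaffine_var]) (use i less.prems fresh in auto)
    then show "multiaffine (?U k) (\<lambda>z. f i z * z (i+1,k+1,L))"
      by (rule multiaffine_mono) (use i in auto)
  qed simp
  have "multiaffine (?U k) (g k)" by (rule multiaffine_mono[OF g[OF less.prems]]) auto
  moreover have "f k = (\<lambda>z. g k z - (\<Sum>i<k. f i z * z (i+1,k+1,L)))" using eq less.prems by auto
  ultimately show ?case using multiaffine_diff[OF _ sum] by simp
qed

lemma lower_substitution_multiaffine:
  fixes f g :: "nat \<Rightarrow> assignment \<Rightarrow> complex"
  assumes eq: "\<And>k z. k < n \<Longrightarrow> f k z = g k z - (\<Sum>i\<in>{k<..<n}. f i z * z (i+1,k+1,L))"
    and g: "\<And>k. k < n \<Longrightarrow> multiaffine A (g k)"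
    and fresh: "\<And>a b. (a,b,L) \<notin> A"
  shows "k < n \<Longrightarrow> multiaffine (A \<union> {(a,b,l). l = L \<and> k+1 \<le> b \<and> b < a \<and> a \<le> n}) (f k)"
proof (induction k rule: measure_induct_rule[where f="\<lambda>k. n - k"])
  case (less k)
  let ?U = "\<lambda>k. A \<union> {(a,b,l). l = L \<and> k+1 \<le> b \<and> b < a \<and> a \<le> n}"
  have sum: "multiaffine (?U k) (\<lambda>z. \<Sum>i\<in>{k<..<n}. f i z * z (i+1,k+1,L))"
  proof (rule multiaffine_sum)
    fix i assume i: "i \<in> {k<..<n}"
    have "multiaffine (?U i \<union> {(i+1,k+1,L)}) (\<lambda>z. f i z * z (i+1,k+1,L))"
      by (rule multiaffine_mult[OF less.IH multiaffine_var]) (use i less.prems fresh in auto)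
    then show "multiaffine (?U k) (\<lambda>z. f i z * z (i+1,k+1,L))"
      by (rule multiaffine_mono) (use i in auto)
  qed simp
  have "multiaffine (?U k) (g k)" by (rule multiaffine_mono[OF g[OF less.prems]]) auto
  moreover have "f k = (\<lambda>z. g k z - (\<Sum>i\<in>{k<..<n}. f i z * z (i+1,k+1,L)))"
    using eq less.prems by auto
  ultimately show ?case using multiaffine_diff[OF _ sum] by simp
qed

section \<open>Induction on the number of factors\<close>

lemma Vars_Suc_fresh: "(a, b, Suc K) \<notin> Vars n K"
  by (auto simp: Vars_def)

lemma last_row_step_even:
  assumes last: "\<And>k. k < n \<Longrightarrow> multiaffine (Vars n K) (\<lambda>z. Psi n K z $$ (n-1,k))"
    and even: "even (Suc K)" and k: "k < n"
  shows "multiaffine (Vars n K \<union> {(a,b,l). l = Suc K \<and> 1 \<le> a \<and> a < b \<and> b \<le> k+1})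
           (\<lambda>z. Psi n (Suc K) z $$ (n-1,k))"
proof (rule upper_substitution_multiaffine[OF _ last Vars_Suc_fresh k])
  fix k z assume "k < n"
  have T: "{i. i < n \<and> free_entry (Suc K) i k} = {..<k}"
    using even \<open>k < n\<close> by (auto simp: free_entry_def)
  show "Psi n (Suc K) z $$ (n-1,k) = Psi n K z $$ (n-1,k)
      - (\<Sum>i<k. Psi n (Suc K) z $$ (n-1,i) * z (i+1,k+1,Suc K))"
    using last_row_Psi_Suc[OF \<open>k < n\<close>, of K z] by (simp only: T)
qed

lemma last_row_step_odd:
  assumes last: "\<And>k. k < n \<Longrightarrow> multiaffine (Vars n K) (\<lambda>z. Psi n K z $$ (n-1,k))"
    and odd: "odd (Suc K)" and k: "k < n"
  shows "multiaffine (Vars n K \<union> {(a,b,l). l = Suc K \<and> k+1 \<le> b \<and> b < a \<and> a \<le> n})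
           (\<lambda>z. Psi n (Suc K) z $$ (n-1,k))"
proof (rule lower_substitution_multiaffine[OF _ last Vars_Suc_fresh k])
  fix k z assume "k < n"
  have T: "{i. i < n \<and> free_entry (Suc K) i k} = {k<..<n}"
    using odd by (auto simp: free_entry_def)
  show "Psi n (Suc K) z $$ (n-1,k) = Psi n K z $$ (n-1,k)
      - (\<Sum>i\<in>{k<..<n}. Psi n (Suc K) z $$ (n-1,i) * z (i+1,k+1,Suc K))"
    using last_row_Psi_Suc[OF \<open>k < n\<close>, of K z] by (simp only: T)
qed

lemma last_row_multiaffine: "k < n \<Longrightarrow> multiaffine (Vars n K) (\<lambda>z. Psi n K z $$ (n-1,k))"
proof (induction K arbitrary: k)
  case 0
  then show ?case using multiaffine_const[of "Vars n 0" "1\<^sub>m n $$ (n-1,k)"] by simp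
next
  case (Suc K)
  show ?case
  proof (cases "even (Suc K)")
    case True
    show ?thesis
      by (rule multiaffine_mono[OF last_row_step_even[OF Suc.IH True Suc.prems]])
         (use True Suc.prems in \<open>auto simp: Vars_def\<close>)
  next
    case False
    show ?thesis
      by (rule multiaffine_mono[OF last_row_step_odd[OF Suc.IH False Suc.prems]])
         (use False Suc.prems in \<open>auto simp: Vars_def\<close>)
  qed
qed

text \<open>The theorem: apply the last step \<open>K-1 \<rightarrow> K\<close> to the row of \<open>\<Psi>\<^sub>K\<^sub>-\<^sub>1\<close>, which
  yields the sharper dependence on \<open>Z\<^sub>K\<close>.\<close>

theorem mainTheorem10:
  fixes n K k :: nat
  assumes "n \<ge> 2" and "K \<ge> 1" and "1 \<le> k" and "k \<le> n"
  shows "polyfun (Pcomp n K k)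
    \<and> (\<forall>v \<in> Vars n K. at_most_linear_in v (Pcomp n K k))
    \<and> (even K \<longrightarrow> depends_only_on
          {(i,j,l) \<in> Vars n K. l < K \<or> (l = K \<and> 1 \<le> i \<and> i < j \<and> j \<le> k)} (Pcomp n K k))
    \<and> (odd K \<longrightarrow> depends_only_on
          {(i,j,l) \<in> Vars n K. l < K \<or> (l = K \<and> k \<le> j \<and> j < i \<and> i \<le> n)} (Pcomp n K k))"
proof -
  obtain K0 where K0: "K = Suc K0" using assms(2) by (cases K) auto
  have k: "k - 1 < n" using assms by auto
  have P: "Pcomp n K k = (\<lambda>z. Psi n (Suc K0) z $$ (n-1,k-1))" unfolding Pcomp_def K0 by simp
  note last = last_row_multiaffine[of _ n K0]
  show ?thesis
  proof (cases "even K")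
    case True
    have "multiaffine {(i,j,l) \<in> Vars n K. l < K \<or> (l = K \<and> 1 \<le> i \<and> i < j \<and> j \<le> k)} (Pcomp n K k)"
      unfolding P by (rule multiaffine_mono[OF last_row_step_even[OF last _ k]])
                     (use True assms K0 in \<open>auto simp: Vars_def\<close>)
    then show ?thesis using True unfolding multiaffine_def by auto
  next
    case False
    have "multiaffine {(i,j,l) \<in> Vars n K. l < K \<or> (l = K \<and> k \<le> j \<and> j < i \<and> i \<le> n)} (Pcomp n K k)"
      unfolding P by (rule multiaffine_mono[OF last_row_step_odd[OF last _ k]])
                     (use False assms K0 in \<open>auto simp: Vars_def\<close>)
    then show ?thesis using False unfolding multiaffine_def by auto
  qed
qed

end
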